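(* Let $s_0,t_0\ge 1$ be real numbers and let $\mathcal T$ be the infinite rooted tree of nodes generated from $(s_0,t_0)$ by the recursive rule described in the context. Then the set of accumulation points in $\mathbb R^2$ of the set of locations of the nodes of $\mathcal T$ is exactly the closed segment with extremities $(-1,s_0)$ and $(1,t_0)$, i.e. the set $\{(x,\,\tfrac{s_0+t_0}{2}+\tfrac{t_0-s_0}{2}x): x\in[-1,1]\}$.
   Context: Points of $\mathbb R^2$ are written $(x,y)$ (abscissa = space, ordinate = time). Given real numbers $s_0,t_0\ge 1$, a tree $\mathcal T$ is built recursively. Each node has a location $(x,y)\in\mathbb R^2$, a depth $d\in\mathbb N$ (the number of its ancestors that are split nodes), and a pair of real parameters $(s,t)$. The root is at $(0,0)$, has depth $0$ and parameters $(s_0,t_0)$. A node at $(x,y)$ of depth $d$ with parameters $(s,t)$ is: - a delay node if $s\ge 2$ and $t\ge 2$; it then has exactly one child, located at $(x,\,y+2^{-d})$, of depth $d$, with parameters $(s-1,\,t-1)$; - a split node otherwise (i.e. if $s<2$ or $t<2$); it then has exactly two children, both of depth $d+1$: a left child at $(x-2^{-(d+1)},\,y+2^{-(d+1)})$ with parameters $(2s-1,\,s+t-1)$, and a right child at $(x+2^{-(d+1)},\,y+2^{-(d+1)})$ with parameters $(s+t-1,\,2t-1)$. The recursion never stops, so $\mathcal T$ is infinite; each node is joined to its children by straight edges. *)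

theory Defs
  imports "HOL-Analysis.Analysis"
begin

text \<open>tree_node s0 t0 p d s t: there is a node of the tree generated from (s0,t0)
  located at p = (x,y), of depth d, with parameters (s,t).\<close>
inductive tree_node :: "real \<Rightarrow> real \<Rightarrow> real \<times> real \<Rightarrow> nat \<Rightarrow> real \<Rightarrow> real \<Rightarrow> bool"
  for s0 t0 :: real where
  root: "tree_node s0 t0 (0, 0) 0 s0 t0"
| delay: "\<lbrakk>tree_node s0 t0 (x, y) d s t; s \<ge> 2; t \<ge> 2\<rbrakk>
     \<Longrightarrow> tree_node s0 t0 (x, y + (1/2) ^ d) d (s - 1) (t - 1)"
| split_left: "\<lbrakk>tree_node s0 t0 (x, y) d s t; s < 2 \<or> t < 2\<rbrakk>
     \<Longrightarrow> tree_node s0 t0 (x - (1/2) ^ (d + 1), y + (1/2) ^ (d + 1)) (d + 1) (2 * s - 1) (s + t - 1)"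
| split_right: "\<lbrakk>tree_node s0 t0 (x, y) d s t; s < 2 \<or> t < 2\<rbrakk>
     \<Longrightarrow> tree_node s0 t0 (x + (1/2) ^ (d + 1), y + (1/2) ^ (d + 1)) (d + 1) (s + t - 1) (2 * t - 1)"

definition node_locations :: "real \<Rightarrow> real \<Rightarrow> (real \<times> real) set" where
  "node_locations s0 t0 = {p. \<exists>d s t. tree_node s0 t0 p d s t}"

end

theory Submission
  imports Defs
begin

text \<open>Along the tree \<open>s - t = s0 - t0\<close> is invariant, \<open>s, t \<ge> 1\<close> and \<open>s + t\<close> stays bounded.
  A node \<open>(x, y)\<close> of depth \<open>d\<close> has \<open>\<bar>x\<bar> + 2^-d \<le> 1\<close>, coordinates in \<open>2^-d \<int>\<close>, and its apex
  \<open>(x, y + (s + t)/2 * 2^-d)\<close> lies on the line through \<open>(-1, s0)\<close> and \<open>(1, t0)\<close>. Hence a node at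
  distance \<open>r\<close> from the segment has \<open>2^-d\<close> of order at least \<open>r\<close>, so near a point off the segment
  all nodes lie on one dyadic grid and are finitely many. Conversely, delay chains are finite
  since \<open>s\<close> drops by 1 at each delay, so every depth is reached by split nodes, whose two children
  halve the abscissa interval \<open>[x - 2^-d, x + 2^-d]\<close>: every abscissa in \<open>[-1, 1]\<close> is within
  \<open>2^-d\<close> of a node of depth \<open>d\<close>, which lies within \<open>O(2^-d)\<close> of the segment point above it.\<close>

definition segment_ordinate :: "real \<Rightarrow> real \<Rightarrow> real \<Rightarrow> real" where
  "segment_ordinate s0 t0 x = (s0 + t0) / 2 + (t0 - s0) / 2 * x"

text \<open>After a split, \<open>s < 2\<close> or \<open>t < 2\<close> together with \<open>s - t = s0 - t0\<close> bounds the parameter sum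
  of both children by \<open>6 + 3 * \<bar>s0 - t0\<bar>\<close>; delays only decrease it.\<close>

definition param_sum_bound :: "real \<Rightarrow> real \<Rightarrow> real" where
  "param_sum_bound s0 t0 = max (s0 + t0) (6 + 3 * \<bar>s0 - t0\<bar>)"

lemma param_sum_bound_pos: "0 < param_sum_bound s0 t0"
  by (simp add: param_sum_bound_def less_max_iff_disj add_pos_nonneg)

lemma closed_segment_eq_graph_segment_ordinate:
  fixes s0 t0 :: real
  shows "closed_segment (-1, s0) (1, t0) = {(x, segment_ordinate s0 t0 x) | x. \<bar>x\<bar> \<le> 1}"
proof safe
  fix p :: "real \<times> real" assume "p \<in> closed_segment (-1, s0) (1, t0)"
  then obtain u :: real where u: "0 \<le> u" "u \<le> 1" "p = (1 - u) *\<^sub>R (-1, s0) + u *\<^sub>R (1, t0)"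
    unfolding closed_segment_def by blast
  then have "p = (2 * u - 1, segment_ordinate s0 t0 (2 * u - 1))" "\<bar>2 * u - 1\<bar> \<le> 1"
    by (auto simp: segment_ordinate_def field_simps)
  then show "\<exists>x. p = (x, segment_ordinate s0 t0 x) \<and> \<bar>x\<bar> \<le> 1" by blast
next
  fix x :: real assume "\<bar>x\<bar> \<le> 1"
  then have "0 \<le> (x + 1) / 2" "(x + 1) / 2 \<le> 1"
    and "(x, segment_ordinate s0 t0 x) = (1 - (x + 1) / 2) *\<^sub>R (-1, s0) + ((x + 1) / 2) *\<^sub>R (1, t0)"
    by (auto simp: segment_ordinate_def field_simps)
  then show "(x, segment_ordinate s0 t0 x) \<in> closed_segment (-1, s0) (1, t0)"
    unfolding closed_segment_def by blast
qed

lemma dist_segment_ordinate_points: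
  "dist (x, segment_ordinate s0 t0 x) (x', segment_ordinate s0 t0 x')
     \<le> (1 + \<bar>t0 - s0\<bar> / 2) * \<bar>x - x'\<bar>"
proof -
  have diff: "segment_ordinate s0 t0 x - segment_ordinate s0 t0 x' = (t0 - s0) / 2 * (x - x')"
    by (simp add: segment_ordinate_def field_simps)
  have "\<bar>segment_ordinate s0 t0 x - segment_ordinate s0 t0 x'\<bar> = \<bar>t0 - s0\<bar> / 2 * \<bar>x - x'\<bar>"
    unfolding diff by (simp add: abs_mult)
  then have "dist (x, segment_ordinate s0 t0 x) (x', segment_ordinate s0 t0 x')
      \<le> \<bar>x - x'\<bar> + \<bar>t0 - s0\<bar> / 2 * \<bar>x - x'\<bar>"
    using norm_Pair_le[of "x - x'" "segment_ordinate s0 t0 x - segment_ordinate s0 t0 x'"]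
    by (simp add: dist_norm)
  then show ?thesis by (simp add: algebra_simps)
qed

lemma segment_ordinate_split_children:
  assumes "y + (s + t) / 2 * h = segment_ordinate s0 t0 x" and "s - t = s0 - t0"
  shows "y + h / 2 + (2 * s - 1 + (s + t - 1)) / 2 * (h / 2) = segment_ordinate s0 t0 (x - h / 2)"
    and "y + h / 2 + (s + t - 1 + (2 * t - 1)) / 2 * (h / 2) = segment_ordinate s0 t0 (x + h / 2)"
proof -
  have t: "t = s - s0 + t0" and y: "y = segment_ordinate s0 t0 x - (s + t) / 2 * h"
    using assms by simp_all
  show "y + h / 2 + (2 * s - 1 + (s + t - 1)) / 2 * (h / 2) = segment_ordinate s0 t0 (x - h / 2)"
    and "y + h / 2 + (s + t - 1 + (2 * t - 1)) / 2 * (h / 2) = segment_ordinate s0 t0 (x + h / 2)"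
    unfolding y t segment_ordinate_def by (simp_all add: field_simps)
qed

lemma Ints_mult_power2_mono:
  fixes a :: real
  assumes "a * 2 ^ d \<in> \<int>" and "d \<le> N"
  shows "a * 2 ^ N \<in> \<int>"
proof -
  have "a * 2 ^ N = (a * 2 ^ d) * 2 ^ (N - d)"
    using assms(2) by (metis le_add_diff_inverse mult.assoc power_add)
  also have "\<dots> \<in> \<int>"
    by (rule Ints_mult[OF assms(1) Ints_power]) simp
  finally show ?thesis .
qed

lemma finite_bounded_scaled_Ints:
  fixes c R :: real
  assumes "0 < c"
  shows "finite {x. \<bar>x\<bar> \<le> R \<and> x * c \<in> \<int>}"
proof -
  have "{x. \<bar>x\<bar> \<le> R \<and> x * c \<in> \<int>} \<subseteq> (\<lambda>k. k / c) ` {k \<in> \<int>. \<bar>k\<bar> \<le> R * c}"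
  proof
    fix x assume "x \<in> {x. \<bar>x\<bar> \<le> R \<and> x * c \<in> \<int>}"
    then have "x = x * c / c" "x * c \<in> {k \<in> \<int>. \<bar>k\<bar> \<le> R * c}"
      using assms by (auto simp: abs_mult mult_right_mono)
    then show "x \<in> (\<lambda>k. k / c) ` {k \<in> \<int>. \<bar>k\<bar> \<le> R * c}" by blast
  qed
  then show ?thesis
    by (rule finite_subset) (simp add: finite_abs_int_segment)
qed

lemma finite_bounded_scaled_Ints_pairs:
  fixes A :: "(real \<times> real) set" and c :: real
  assumes "bounded A" and "0 < c"
  shows "finite {z \<in> A. fst z * c \<in> \<int> \<and> snd z * c \<in> \<int>}"
proof -
  obtain R where R: "\<And>z. z \<in> A \<Longrightarrow> norm z \<le> R"
    using assms(1) bounded_iff by blast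
  have "{z \<in> A. fst z * c \<in> \<int> \<and> snd z * c \<in> \<int>}
      \<subseteq> {x. \<bar>x\<bar> \<le> R \<and> x * c \<in> \<int>} \<times> {y. \<bar>y\<bar> \<le> R \<and> y * c \<in> \<int>}"
  proof
    fix z assume z: "z \<in> {z \<in> A. fst z * c \<in> \<int> \<and> snd z * c \<in> \<int>}"
    then have "norm z \<le> R"
      using R by blast
    moreover have "norm (fst z) \<le> norm z" "norm (snd z) \<le> norm z"
      using norm_fst_le[of "fst z" "snd z"] norm_snd_le[of "snd z" "fst z"] by simp_all
    ultimately have "norm (fst z) \<le> R" "norm (snd z) \<le> R"
      by simp_all
    with z show "z \<in> {x. \<bar>x\<bar> \<le> R \<and> x * c \<in> \<int>} \<times> {y. \<bar>y\<bar> \<le> R \<and> y * c \<in> \<int>}"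
      by (auto simp: mem_Times_iff)
  qed
  then show ?thesis
    by (rule finite_subset) (simp add: finite_bounded_scaled_Ints assms(2))
qed

lemma tree_node_param_diff: "tree_node s0 t0 p d s t \<Longrightarrow> s - t = s0 - t0"
  by (induction rule: tree_node.induct) auto

lemma tree_node_params_ge_one:
  "tree_node s0 t0 p d s t \<Longrightarrow> 1 \<le> s0 \<Longrightarrow> 1 \<le> t0 \<Longrightarrow> 1 \<le> s \<and> 1 \<le> t"
  by (induction rule: tree_node.induct) auto

lemma tree_node_param_sum_le: "tree_node s0 t0 p d s t \<Longrightarrow> s + t \<le> param_sum_bound s0 t0"
proof (induction rule: tree_node.induct)
  case (split_left x y d s t)
  have "(2 * s - 1) + (s + t - 1) \<le> 6 + 3 * \<bar>s0 - t0\<bar>"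
    using split_left.hyps tree_node_param_diff[OF split_left.hyps(1)] by (auto simp: abs_if)
  then show ?case by (simp add: param_sum_bound_def)
next
  case (split_right x y d s t)
  have "(s + t - 1) + (2 * t - 1) \<le> 6 + 3 * \<bar>s0 - t0\<bar>"
    using split_right.hyps tree_node_param_diff[OF split_right.hyps(1)] by (auto simp: abs_if)
  then show ?case by (simp add: param_sum_bound_def)
qed (auto simp: param_sum_bound_def)

lemma tree_node_abscissa: "tree_node s0 t0 p d s t \<Longrightarrow> \<bar>fst p\<bar> + (1/2) ^ d \<le> 1"
proof (induction rule: tree_node.induct)
  case (split_left x y d s t)
  define h :: real where "h = (1/2) ^ (d + 1)"
  have "0 < h" and "\<bar>x\<bar> + 2 * h \<le> 1"
    using split_left.IH by (simp_all add: h_def)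
  then have "\<bar>x - h\<bar> + h \<le> 1"
    by arith
  then show ?case
    by (simp add: h_def)
next
  case (split_right x y d s t)
  define h :: real where "h = (1/2) ^ (d + 1)"
  have "0 < h" and "\<bar>x\<bar> + 2 * h \<le> 1"
    using split_right.IH by (simp_all add: h_def)
  then have "\<bar>x + h\<bar> + h \<le> 1"
    by arith
  then show ?case
    by (simp add: h_def)
qed simp_all

lemma tree_node_apex:
  "tree_node s0 t0 p d s t \<Longrightarrow> snd p + (s + t) / 2 * (1/2) ^ d = segment_ordinate s0 t0 (fst p)"
proof (induction rule: tree_node.induct)
  case root
  then show ?case
    by (simp add: segment_ordinate_def)
next
  case (delay x y d s t)
  have "y + (1/2) ^ d + (s - 1 + (t - 1)) / 2 * (1/2) ^ d = y + (s + t) / 2 * (1/2) ^ d"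
    by (simp add: field_simps)
  with delay.IH show ?case
    by simp
next
  case (split_left x y d s t)
  then show ?case
    using segment_ordinate_split_children(1)[OF _ tree_node_param_diff] by simp
next
  case (split_right x y d s t)
  then show ?case
    using segment_ordinate_split_children(2)[OF _ tree_node_param_diff] by simp
qed

lemma tree_node_dyadic: "tree_node s0 t0 p d s t \<Longrightarrow> fst p * 2 ^ d \<in> \<int> \<and> snd p * 2 ^ d \<in> \<int>"
proof (induction rule: tree_node.induct)
  case (delay x y d s t)
  have "(y + (1/2) ^ d) * 2 ^ d = y * 2 ^ d + 1"
    by (simp add: algebra_simps power_one_over)
  with delay.IH show ?case by simp
next
  case (split_left x y d s t)
  have "(x - (1/2) ^ (d + 1)) * 2 ^ (d + 1) = 2 * (x * 2 ^ d) - 1"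
    and "(y + (1/2) ^ (d + 1)) * 2 ^ (d + 1) = 2 * (y * 2 ^ d) + 1"
    by (simp_all add: algebra_simps power_one_over)
  with split_left.IH show ?case by simp
next
  case (split_right x y d s t)
  have "(x + (1/2) ^ (d + 1)) * 2 ^ (d + 1) = 2 * (x * 2 ^ d) + 1"
    and "(y + (1/2) ^ (d + 1)) * 2 ^ (d + 1) = 2 * (y * 2 ^ d) + 1"
    by (simp_all add: algebra_simps power_one_over)
  with split_right.IH show ?case by simp
qed simp

lemma tree_node_below_apex:
  assumes "tree_node s0 t0 (x, y) d s t" and "1 \<le> s0" and "1 \<le> t0"
  shows "y < segment_ordinate s0 t0 x"
    and "dist (x, y) (x, segment_ordinate s0 t0 x) \<le> param_sum_bound s0 t0 * (1/2) ^ d"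
proof -
  have gap: "segment_ordinate s0 t0 x - y = (s + t) / 2 * (1/2) ^ d"
    using tree_node_apex[OF assms(1)] by simp
  have "1 \<le> s" "1 \<le> t" "s + t \<le> param_sum_bound s0 t0"
    using tree_node_params_ge_one[OF assms] tree_node_param_sum_le[OF assms(1)] by auto
  then have "0 < (s + t) / 2" "(s + t) / 2 \<le> param_sum_bound s0 t0"
    by auto
  then have pos: "0 < (s + t) / 2 * (1/2) ^ d"
    and bound: "(s + t) / 2 * (1/2) ^ d \<le> param_sum_bound s0 t0 * (1/2) ^ d"
    by (simp_all add: mult_right_mono)
  with gap show "y < segment_ordinate s0 t0 x"
    by linarith
  have "dist (x, y) (x, segment_ordinate s0 t0 x) = \<bar>segment_ordinate s0 t0 x - y\<bar>"
    by (simp add: dist_Pair_Pair dist_real_def abs_minus_commute)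
  also have "\<dots> = (s + t) / 2 * (1/2) ^ d"
    using gap pos by simp
  also have "\<dots> \<le> param_sum_bound s0 t0 * (1/2) ^ d"
    by (rule bound)
  finally show "dist (x, y) (x, segment_ordinate s0 t0 x) \<le> param_sum_bound s0 t0 * (1/2) ^ d" .
qed

lemma tree_node_infdist_segment_le:
  assumes "tree_node s0 t0 (x, y) d s t" and "1 \<le> s0" and "1 \<le> t0"
  shows "infdist (x, y) (closed_segment (-1, s0) (1, t0)) \<le> param_sum_bound s0 t0 * (1/2) ^ d"
proof -
  have "0 \<le> (1/2::real) ^ d" and "\<bar>x\<bar> + (1/2) ^ d \<le> 1"
    using tree_node_abscissa[OF assms(1)] by simp_all
  then have "\<bar>x\<bar> \<le> 1"
    by linarith
  then have "(x, segment_ordinate s0 t0 x) \<in> closed_segment (-1, s0) (1, t0)"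
    unfolding closed_segment_eq_graph_segment_ordinate by blast
  then have "infdist (x, y) (closed_segment (-1, s0) (1, t0)) \<le> dist (x, y) (x, segment_ordinate s0 t0 x)"
    by (rule infdist_le)
  also have "\<dots> \<le> param_sum_bound s0 t0 * (1/2) ^ d"
    by (rule tree_node_below_apex(2)[OF assms])
  finally show ?thesis .
qed

lemma tree_node_reaches_split:
  assumes "tree_node s0 t0 (x, y) d s t"
  shows "\<exists>y' s' t'. tree_node s0 t0 (x, y') d s' t' \<and> (s' < 2 \<or> t' < 2)"
  using assms
proof (induction "nat \<lceil>s\<rceil>" arbitrary: y s t rule: less_induct)
  case less
  show ?case
  proof (cases "s < 2 \<or> t < 2")
    case True
    with less.prems show ?thesis by blast
  next
    case False
    then have "tree_node s0 t0 (x, y + (1/2) ^ d) d (s - 1) (t - 1)"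
      using tree_node.delay[OF less.prems] by simp
    moreover have "nat \<lceil>s - 1\<rceil> < nat \<lceil>s\<rceil>"
      using False by linarith
    ultimately show ?thesis
      using less.hyps by blast
  qed
qed

lemma tree_node_dense_abscissae:
  assumes "\<bar>x0\<bar> \<le> 1"
  shows "\<exists>x y s t. tree_node s0 t0 (x, y) d s t \<and> \<bar>x - x0\<bar> \<le> (1/2) ^ d"
proof (induction d)
  case 0
  show ?case
    using tree_node.root assms by force
next
  case (Suc d)
  then obtain x y s t where "tree_node s0 t0 (x, y) d s t" and close: "\<bar>x - x0\<bar> \<le> (1/2) ^ d"
    by blast
  then obtain y' s' t' where node: "tree_node s0 t0 (x, y') d s' t'" and split: "s' < 2 \<or> t' < 2"
    using tree_node_reaches_split by blast
  define h :: real where "h = (1/2) ^ (d + 1)"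
  have "tree_node s0 t0 (x - h, y' + h) (d + 1) (2 * s' - 1) (s' + t' - 1)"
    and "tree_node s0 t0 (x + h, y' + h) (d + 1) (s' + t' - 1) (2 * t' - 1)"
    unfolding h_def using tree_node.split_left[OF node split] tree_node.split_right[OF node split]
    by simp_all
  moreover have "\<bar>x - h - x0\<bar> \<le> h \<or> \<bar>x + h - x0\<bar> \<le> h"
    using close unfolding h_def abs_le_iff by simp arith
  ultimately show ?case
    unfolding h_def by auto
qed

lemma islimpt_node_locations_in_segment:
  assumes "1 \<le> s0" and "1 \<le> t0" and "p islimpt node_locations s0 t0"
  shows "p \<in> closed_segment (-1, s0) (1, t0)"
proof (rule ccontr)
  define L where "L = closed_segment (-1::real, s0) (1, t0)"
  define B where "B = param_sum_bound s0 t0"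
  define r where "r = infdist p L / 2"
  assume "p \<notin> closed_segment (-1, s0) (1, t0)"
  then have "0 < r"
    unfolding r_def L_def by (simp add: infdist_pos_not_in_closed)
  moreover have "0 < B"
    by (simp add: B_def param_sum_bound_pos)
  ultimately obtain N where N: "(1/2::real) ^ N < r / B"
    using real_arch_pow_inv[of "r / B" "1/2"] by auto
  have "node_locations s0 t0 \<inter> ball p r
      \<subseteq> {z \<in> ball p r. fst z * 2 ^ N \<in> \<int> \<and> snd z * 2 ^ N \<in> \<int>}"
  proof
    fix z assume z: "z \<in> node_locations s0 t0 \<inter> ball p r"
    then obtain x y d s t where z_eq: "z = (x, y)" and node: "tree_node s0 t0 (x, y) d s t"
      unfolding node_locations_def by (cases z) blast
    from z have near: "(x, y) \<in> ball p r"
      unfolding z_eq by blast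
    have "2 * r \<le> infdist (x, y) L + dist p (x, y)"
      unfolding r_def using infdist_triangle[of p L "(x, y)"] by simp
    also have "\<dots> < B * (1/2) ^ d + r"
      using tree_node_infdist_segment_le[OF node assms(1,2)] near by (simp add: B_def L_def)
    finally have "r < B * (1/2) ^ d"
      by simp
    moreover have "B * (1/2) ^ N < r"
      using N \<open>0 < B\<close> by (simp add: pos_less_divide_eq mult.commute)
    ultimately have "B * (1/2) ^ N < B * (1/2) ^ d"
      by linarith
    then have "d \<le> N"
      using \<open>0 < B\<close> by simp
    then have "x * 2 ^ N \<in> \<int>" "y * 2 ^ N \<in> \<int>"
      using tree_node_dyadic[OF node] Ints_mult_power2_mono by auto
    with near show "z \<in> {z \<in> ball p r. fst z * 2 ^ N \<in> \<int> \<and> snd z * 2 ^ N \<in> \<int>}"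
      unfolding z_eq by simp
  qed
  then have "finite (node_locations s0 t0 \<inter> ball p r)"
    by (rule finite_subset) (rule finite_bounded_scaled_Ints_pairs; simp)
  with \<open>0 < r\<close> assms(3) show False
    by (auto simp: islimpt_eq_infinite_ball)
qed

lemma segment_subset_islimpt_node_locations:
  assumes "1 \<le> s0" and "1 \<le> t0" and "q \<in> closed_segment (-1, s0) (1, t0)"
  shows "q islimpt node_locations s0 t0"
  unfolding islimpt_approachable
proof (intro allI impI)
  fix e :: real assume "0 < e"
  obtain x0 where x0: "\<bar>x0\<bar> \<le> 1" and q: "q = (x0, segment_ordinate s0 t0 x0)"
    using assms(3) unfolding closed_segment_eq_graph_segment_ordinate by blast
  define C where "C = param_sum_bound s0 t0 + (1 + \<bar>t0 - s0\<bar> / 2)"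
  have "0 < C"
    using param_sum_bound_pos[of s0 t0] by (simp add: C_def add_pos_nonneg)
  with \<open>0 < e\<close> obtain d where d: "(1/2::real) ^ d < e / C"
    using real_arch_pow_inv[of "e / C" "1/2"] by auto
  obtain x y s t where node: "tree_node s0 t0 (x, y) d s t" and close: "\<bar>x - x0\<bar> \<le> (1/2) ^ d"
    using tree_node_dense_abscissae[OF x0] by blast
  have "dist (x, y) q \<le> dist (x, y) (x, segment_ordinate s0 t0 x) + dist (x, segment_ordinate s0 t0 x) q"
    by (rule dist_triangle)
  also have "\<dots> \<le> param_sum_bound s0 t0 * (1/2) ^ d + (1 + \<bar>t0 - s0\<bar> / 2) * (1/2) ^ d"
  proof (rule add_mono)
    show "dist (x, y) (x, segment_ordinate s0 t0 x) \<le> param_sum_bound s0 t0 * (1/2) ^ d"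
      by (rule tree_node_below_apex(2)[OF node assms(1,2)])
    have "dist (x, segment_ordinate s0 t0 x) q \<le> (1 + \<bar>t0 - s0\<bar> / 2) * \<bar>x - x0\<bar>"
      unfolding q by (rule dist_segment_ordinate_points)
    also have "\<dots> \<le> (1 + \<bar>t0 - s0\<bar> / 2) * (1/2) ^ d"
      by (rule mult_left_mono[OF close]) simp
    finally show "dist (x, segment_ordinate s0 t0 x) q \<le> (1 + \<bar>t0 - s0\<bar> / 2) * (1/2) ^ d" .
  qed
  also have "\<dots> < e"
    using d \<open>0 < C\<close> by (simp add: C_def field_simps)
  finally have "dist (x, y) q < e" .
  moreover have "(x, y) \<noteq> q"
    using tree_node_below_apex(1)[OF node assms(1,2)] q by auto
  moreover have "(x, y) \<in> node_locations s0 t0"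
    unfolding node_locations_def using node by blast
  ultimately show "\<exists>z\<in>node_locations s0 t0. z \<noteq> q \<and> dist z q < e"
    by blast
qed

theorem theorem1:
  fixes s0 t0 :: real
  assumes "s0 \<ge> 1" and "t0 \<ge> 1"
  shows "{p. p islimpt node_locations s0 t0} = closed_segment (-1, s0) (1, t0)"
  using islimpt_node_locations_in_segment[OF assms] segment_subset_islimpt_node_locations[OF assms]
  by blast

end
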